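(* Let $d\in\{1,2,3,7,11\}$, let $K=\mathbb{Q}(\sqrt{-d})$ and let $\mathcal{O}_d$ be its ring of integers. Let $\Delta$ be a positive integer which is not of the form $N(\beta)=\beta\bar\beta$ for any $\beta\in\mathcal{O}_d$. For odd $k\ge 1$ define $H_{k,\Delta}:\mathbb{C}\to\mathbb{R}$ by $$H_{k,\Delta}(z)=\sum_{\substack{(a,b,c)\in\mathbb{Z}\times\mathcal{O}_d\times\mathbb{Z}\\ N(b)-ac=\Delta,\ a<0}}\max\left(0,\left(a|z|^2+bz+\bar b\bar z+c\right)^k\right),$$ and put $\alpha_{k,\Delta}=H_{k,\Delta}(0)$. Then: (1) $H_{1,\Delta}(z)=\alpha_{1,\Delta}$ for all $z\in\mathbb{C}$; (2) if $d\in\{1,3,7\}$, then $H_{3,\Delta}(z)=\alpha_{3,\Delta}$ for all $z\in\mathbb{C}$; (3) if $d=3$, then $H_{5,\Delta}(z)=\alpha_{5,\Delta}$ for all $z\in\mathbb{C}$.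
   Context: $N(b)=b\bar b$ is the norm on $K$. Explicitly $\alpha_{k,\Delta}=\sum_{N(b)-ac=\Delta,\ a<0<c}c^k=\sum_{b\in\mathcal{O}_d,\ N(b)<\Delta}\sigma_k(\Delta-N(b))$, where $\sigma_k$ is the sum of $k$-th powers of divisors. *)

theory Defs
  imports "HOL-Analysis.Analysis"
begin

text \<open>Generator of the ring of integers of Q(sqrt(-d)) for squarefree d > 0:
  sqrt(-d) if d is not 3 mod 4, and (1 + sqrt(-d))/2 if d = 3 mod 4.\<close>
definition omega_d :: "nat \<Rightarrow> complex" where
  "omega_d d = (if d mod 4 = 3 then (1 + \<i> * of_real (sqrt (real d))) / 2
                else \<i> * of_real (sqrt (real d)))"

definition O_d :: "nat \<Rightarrow> complex set" where
  "O_d d = {of_int x + of_int y * omega_d d | x y :: int. True}"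

definition normK :: "complex \<Rightarrow> real" where
  "normK b = (cmod b)^2"

definition idx :: "nat \<Rightarrow> int \<Rightarrow> (int \<times> complex \<times> int) set" where
  "idx d \<Delta> = {(a, b, c). b \<in> O_d d \<and> normK b - real_of_int (a * c) = real_of_int \<Delta> \<and> a < 0}"

definition qform :: "int \<times> complex \<times> int \<Rightarrow> complex \<Rightarrow> real" where
  "qform t z = (case t of (a, b, c) \<Rightarrow>
     Re (of_int a * of_real ((cmod z)^2) + b * z + cnj b * cnj z + of_int c))"

text \<open>H_{k,Delta}(z); only finitely many terms are nonzero, so the (infinite) sum of
  nonnegative terms is a finite sum.\<close>
definition H :: "nat \<Rightarrow> nat \<Rightarrow> int \<Rightarrow> complex \<Rightarrow> real" where
  "H d k \<Delta> z = (\<Sum>\<^sub>\<infinity> t \<in> idx d \<Delta>. max 0 ((qform t z) ^ k))"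

definition alpha :: "nat \<Rightarrow> nat \<Rightarrow> int \<Rightarrow> real" where
  "alpha d k \<Delta> = H d k \<Delta> 0"

end

theory Submission
  imports Defs
begin

text \<open>
  Translation by \<open>\<beta> \<in> O_d\<close> permutes the forms of discriminant \<open>\<Delta>\<close>, so \<open>H\<close> is
  \<open>O_d\<close>-periodic. Since \<open>\<Delta>\<close> is not a norm, no form has \<open>c = 0\<close>; the inversion
  \<open>z \<mapsto> -1/z\<close> permutes the forms with \<open>c < 0\<close>, and the finitely many forms with \<open>c > 0\<close>
  produce the defect \<open>H(z) - |z|^(2k) H(-1/z) = P_k(z)\<close>, the sum of \<open>q(z)^k\<close> over these
  forms. Every point lies within \<open>sqrt(15/16)\<close> of \<open>O_d\<close>, so alternating translations and
  inversions contract: this bounds the partial sums of \<open>H\<close>, and it shows that a bounded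
  periodic \<open>G\<close> with \<open>G(0) = 0\<close> and \<open>G(z) = |z|^(2k) G(-1/z)\<close> vanishes. With
  \<open>G = H - \<alpha>\<close> the theorem reduces to \<open>P_k(z) = \<alpha> (1 - |z|^(2k))\<close>. The involution
  \<open>(a, b, c) \<mapsto> (-c, cnj b, -a)\<close> of the forms with \<open>c > 0\<close> makes the coefficients of \<open>P_k\<close>
  antisymmetric, averaging over the units of \<open>O_d\<close> removes the non-radial terms, and the
  remaining coefficients are killed by the relation coming from the map \<open>z \<mapsto> -1/(z + 1)\<close>
  of order 3 and, for \<open>d = 7\<close>, by a closed cycle of translations and inversions.
\<close>

section \<open>The ring of integers\<close>

definition omega_trace :: "nat \<Rightarrow> int" where
  "omega_trace d = (if d mod 4 = 3 then 1 else 0)"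

definition omega_norm :: "nat \<Rightarrow> int" where
  "omega_norm d = (if d mod 4 = 3 then (int d + 1) div 4 else int d)"

lemma omega_d_mult_self:
  "omega_d d * omega_d d = of_int (omega_trace d) * omega_d d - of_int (omega_norm d)"
proof (cases "d mod 4 = 3")
  case True
  then have "4 dvd int d + 1" by presburger
  then have "real_of_int ((int d + 1) div 4) = (real d + 1) / 4"
    by (simp add: real_of_int_div)
  then show ?thesis
    using True by (simp add: omega_d_def omega_trace_def omega_norm_def complex_eq_iff
        power2_eq_square field_simps)
qed (simp add: omega_d_def omega_trace_def omega_norm_def complex_eq_iff)

lemma cnj_omega_d: "cnj (omega_d d) = of_int (omega_trace d) - omega_d d"
  by (simp add: omega_d_def omega_trace_def complex_eq_iff)

lemma omega_d_mult_cnj: "omega_d d * cnj (omega_d d) = of_int (omega_norm d)"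
  by (simp add: cnj_omega_d right_diff_distrib omega_d_mult_self mult.commute)

lemma Re_omega_d: "Re (omega_d d) = of_int (omega_trace d) / 2"
  by (simp add: omega_d_def omega_trace_def)

lemma Im_omega_d: "Im (omega_d d) = (if d mod 4 = 3 then sqrt (real d) / 2 else sqrt (real d))"
  by (simp add: omega_d_def)

lemma O_d_iff: "b \<in> O_d d \<longleftrightarrow> (\<exists>x y. b = of_int x + of_int y * omega_d d)"
  by (auto simp: O_d_def)

lemma O_dE:
  assumes "b \<in> O_d d"
  obtains x y where "b = of_int x + of_int y * omega_d d"
  using assms by (auto simp: O_d_def)

lemma of_int_in_O_d: "of_int m \<in> O_d d"
  unfolding O_d_iff by (rule exI[of _ m], rule exI[of _ 0]) simp

lemma one_in_O_d: "1 \<in> O_d d"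
  using of_int_in_O_d[of 1] by simp

lemma omega_d_in_O_d: "omega_d d \<in> O_d d"
  unfolding O_d_iff by (rule exI[of _ 0], rule exI[of _ 1]) simp

lemma O_d_add:
  assumes "b \<in> O_d d" "c \<in> O_d d"
  shows "b + c \<in> O_d d"
proof -
  obtain x y x' y' where "b = of_int x + of_int y * omega_d d"
    and "c = of_int x' + of_int y' * omega_d d"
    using assms by (elim O_dE)
  then have "b + c = of_int (x + x') + of_int (y + y') * omega_d d"
    by (simp add: algebra_simps)
  then show ?thesis unfolding O_d_iff by blast
qed

lemma O_d_uminus:
  assumes "b \<in> O_d d"
  shows "- b \<in> O_d d"
proof -
  obtain x y where "b = of_int x + of_int y * omega_d d"
    using assms by (elim O_dE)
  then have "- b = of_int (- x) + of_int (- y) * omega_d d"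
    by (simp add: algebra_simps)
  then show ?thesis unfolding O_d_iff by blast
qed

lemma O_d_diff: "b \<in> O_d d \<Longrightarrow> c \<in> O_d d \<Longrightarrow> b - c \<in> O_d d"
  unfolding diff_conv_add_uminus by (intro O_d_add O_d_uminus)

lemma O_d_mult:
  assumes "b \<in> O_d d" "c \<in> O_d d"
  shows "b * c \<in> O_d d"
proof -
  obtain x y x' y' where b: "b = of_int x + of_int y * omega_d d"
    and c: "c = of_int x' + of_int y' * omega_d d"
    using assms by (elim O_dE)
  have "b * c = of_int (x * x') + of_int (x * y' + x' * y) * omega_d d
      + of_int (y * y') * (omega_d d * omega_d d)"
    by (simp add: b c algebra_simps)
  also have "\<dots> = of_int (x * x' - omega_norm d * y * y')
      + of_int (x * y' + x' * y + omega_trace d * y * y') * omega_d d"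
    by (simp add: omega_d_mult_self algebra_simps)
  finally show ?thesis unfolding O_d_iff by blast
qed

lemma O_d_cnj:
  assumes "b \<in> O_d d"
  shows "cnj b \<in> O_d d"
proof -
  obtain x y where "b = of_int x + of_int y * omega_d d"
    using assms by (elim O_dE)
  then have "cnj b = of_int (x + omega_trace d * y) + of_int (- y) * omega_d d"
    by (simp add: cnj_omega_d algebra_simps)
  then show ?thesis unfolding O_d_iff by blast
qed

lemma O_d_mult_cnj_Ints:
  assumes "b \<in> O_d d"
  shows "b * cnj b \<in> \<int>"
proof -
  obtain x y where b: "b = of_int x + of_int y * omega_d d"
    using assms by (elim O_dE)
  have "b * cnj b = of_int (x * x + omega_trace d * x * y)
      + of_int (y * y) * (of_int (omega_trace d) * omega_d d - omega_d d * omega_d d)"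
    by (simp add: b cnj_omega_d algebra_simps)
  also have "\<dots> = of_int (x * x + omega_trace d * x * y + omega_norm d * y * y)"
    by (simp add: omega_d_mult_self algebra_simps)
  finally show ?thesis by simp
qed

lemma O_d_add_cnj_Ints:
  assumes "b \<in> O_d d"
  shows "b + cnj b \<in> \<int>"
proof -
  obtain x y where "b = of_int x + of_int y * omega_d d"
    using assms by (elim O_dE)
  then have "b + cnj b = of_int (2 * x + omega_trace d * y)"
    by (simp add: cnj_omega_d algebra_simps)
  then show ?thesis by simp
qed

lemma O_d_covering:
  assumes "d \<in> {1, 2, 3, 7, 11}"
  shows "\<exists>\<beta>\<in>O_d d. (cmod (z - \<beta>))\<^sup>2 \<le> 15 / 16"
proof -
  let ?w = "omega_d d"
  have Im_pos: "Im ?w > 0" and Im_sq: "(Im ?w)\<^sup>2 \<le> 11 / 4"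
    using assms by (auto simp: Im_omega_d power_divide)
  define y where "y = round (Im z / Im ?w)"
  define x where "x = round (Re z - of_int y * Re ?w)"
  define \<beta> where "\<beta> = of_int x + of_int y * ?w"
  have "\<beta> \<in> O_d d"
    unfolding \<beta>_def O_d_iff by blast
  have "\<bar>Im z / Im ?w - of_int y\<bar> \<le> 1 / 2"
    unfolding y_def using of_int_round_abs_le[of "Im z / Im ?w"] by linarith
  moreover have "Im (z - \<beta>) = Im ?w * (Im z / Im ?w - of_int y)"
    using Im_pos by (simp add: \<beta>_def field_simps)
  ultimately have "\<bar>Im (z - \<beta>)\<bar> \<le> Im ?w / 2"
    using Im_pos by (simp add: abs_mult)
  then have "(Im (z - \<beta>))\<^sup>2 \<le> (Im ?w / 2)\<^sup>2"
    by (metis abs_ge_zero power2_abs power_mono)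
  moreover have "\<bar>Re (z - \<beta>)\<bar> \<le> 1 / 2"
    unfolding \<beta>_def x_def using of_int_round_abs_le[of "Re z - of_int y * Re ?w"]
    by (simp add: abs_minus_commute algebra_simps)
  then have "(Re (z - \<beta>))\<^sup>2 \<le> (1 / 2)\<^sup>2"
    by (metis abs_ge_zero power2_abs power_mono)
  ultimately have "(cmod (z - \<beta>))\<^sup>2 \<le> 1 / 4 + (Im ?w)\<^sup>2 / 4"
    by (simp add: cmod_power2 power_divide)
  also have "\<dots> \<le> 15 / 16"
    using Im_sq by simp
  finally show ?thesis
    using \<open>\<beta> \<in> O_d d\<close> by blast
qed

lemma O_d_coords_le:
  assumes "d > 0" "b = of_int x + of_int y * omega_d d"
  shows "\<bar>real_of_int x\<bar> \<le> 2 * cmod b" "\<bar>real_of_int y\<bar> \<le> 2 * cmod b"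
proof -
  have "sqrt (real d) \<ge> 1"
    using assms(1) by simp
  moreover have "Im (omega_d d) \<ge> sqrt (real d) / 2"
    by (simp add: Im_omega_d)
  ultimately have "Im (omega_d d) \<ge> 1 / 2"
    by linarith
  moreover have "\<bar>Im b\<bar> = \<bar>of_int y\<bar> * Im (omega_d d)"
    using assms(2) \<open>Im (omega_d d) \<ge> 1 / 2\<close> by (simp add: abs_mult)
  ultimately have "\<bar>of_int y\<bar> * (1 / 2) \<le> \<bar>Im b\<bar>"
    using mult_left_mono[of "1 / 2" "Im (omega_d d)" "\<bar>real_of_int y\<bar>"] by simp
  then show y: "\<bar>real_of_int y\<bar> \<le> 2 * cmod b"
    using abs_Im_le_cmod[of b] by linarith
  have "\<bar>real_of_int y * (of_int (omega_trace d) / 2)\<bar> \<le> \<bar>real_of_int y\<bar> / 2"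
    by (auto simp: omega_trace_def)
  then show "\<bar>real_of_int x\<bar> \<le> 2 * cmod b"
    using assms(2) y abs_Re_le_cmod[of b] by (simp add: Re_omega_d)
qed

lemma finite_O_d_normK_le:
  assumes "d > 0"
  shows "finite {b \<in> O_d d. normK b \<le> R}"
proof -
  define n where "n = \<lceil>2 * sqrt R\<rceil>"
  let ?S = "(\<lambda>(x, y). of_int x + of_int y * omega_d d) ` ({-n..n} \<times> {-n..n})"
  have "{b \<in> O_d d. normK b \<le> R} \<subseteq> ?S"
  proof
    fix b assume "b \<in> {b \<in> O_d d. normK b \<le> R}"
    then have b: "b \<in> O_d d" and "(cmod b)\<^sup>2 \<le> R"
      by (auto simp: normK_def)
    then have "2 * cmod b \<le> 2 * sqrt R"
      using real_sqrt_le_mono[of "(cmod b)\<^sup>2" R] by simp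
    moreover obtain x y where xy: "b = of_int x + of_int y * omega_d d"
      using b by (elim O_dE)
    ultimately have "\<bar>x\<bar> \<le> n" "\<bar>y\<bar> \<le> n"
      using O_d_coords_le[OF assms xy] unfolding n_def by linarith+
    then show "b \<in> ?S"
      using xy by (auto intro!: image_eqI[of _ _ "(x, y)"])
  qed
  then show ?thesis
    by (rule finite_subset) simp
qed

section \<open>Integral binary Hermitian forms\<close>

lemma normK_cnj [simp]: "normK (cnj b) = normK b"
  by (simp add: normK_def)

lemma of_real_normK: "complex_of_real (normK b) = b * cnj b"
  unfolding normK_def by (rule complex_norm_square)

lemma two_Re_mult_sq:
  "2 * (Re (b * z))\<^sup>2 = normK b * (cmod z)\<^sup>2 + Re (b\<^sup>2) * Re (z\<^sup>2) - Im (b\<^sup>2) * Im (z\<^sup>2)"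
  unfolding normK_def cmod_power2 by (simp add: power2_eq_square algebra_simps)

lemma Re_cnj_power2 [simp]: "Re ((cnj b)\<^sup>2) = Re (b\<^sup>2)"
  by (simp add: power2_eq_square)

lemma Im_cnj_power2 [simp]: "Im ((cnj b)\<^sup>2) = - Im (b\<^sup>2)"
  by (simp add: power2_eq_square)

type_synonym form = "int \<times> complex \<times> int"

definition cqform :: "form \<Rightarrow> complex \<Rightarrow> complex" where
  "cqform t z = (case t of (a, b, c) \<Rightarrow> of_int a * (z * cnj z) + b * z + cnj b * cnj z + of_int c)"

lemma of_real_qform: "complex_of_real (qform t z) = cqform t z"
proof -
  obtain a b c where t: "t = (a, b, c)"
    by (cases t) auto
  have "of_int a * complex_of_real ((cmod z)\<^sup>2) + b * z + cnj b * cnj z + of_int c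
      = of_int a * (z * cnj z) + (b * z + cnj (b * z)) + of_int c"
    by (simp only: complex_norm_square) simp
  moreover have "Im (of_int a * (z * cnj z) + (b * z + cnj (b * z)) + of_int c) = 0"
    by (simp add: complex_mult_cnj)
  ultimately show ?thesis
    unfolding qform_def cqform_def t by (simp add: complex_eq_iff)
qed

lemma qform_eqI: "cqform t z = complex_of_real r \<Longrightarrow> qform t z = r"
  by (metis of_real_qform of_real_eq_iff)

lemma qform_eq: "qform (a, b, c) z = of_int a * (cmod z)\<^sup>2 + of_int c + 2 * Re (b * z)"
  by (simp add: qform_def)

lemma qform_zero: "qform (a, b, c) 0 = of_int c"
  by (simp add: qform_def)

lemma qform_in_Ints:
  assumes "b \<in> O_d d" "\<beta> \<in> O_d d"
  shows "qform (a, b, c) \<beta> \<in> \<int>"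
proof -
  obtain m where m: "\<beta> * cnj \<beta> = of_int m"
    using O_d_mult_cnj_Ints[OF assms(2)] by (elim Ints_cases)
  obtain n where n: "b * \<beta> + cnj (b * \<beta>) = of_int n"
    using O_d_add_cnj_Ints[OF O_d_mult[OF assms]] by (elim Ints_cases)
  have "cqform (a, b, c) \<beta> = of_real (of_int (a * m + n + c))"
    unfolding cqform_def using m n by (simp add: algebra_simps)
  then show ?thesis
    by (metis qform_eqI Ints_of_int)
qed

definition disc :: "form \<Rightarrow> real" where
  "disc t = (case t of (a, b, c) \<Rightarrow> normK b - of_int (a * c))"

lemma of_real_disc: "complex_of_real (disc (a, b, c)) = b * cnj b - of_int a * of_int c"
  by (simp add: disc_def of_real_normK)

lemma disc_eqI: "b * cnj b - of_int a * of_int c = complex_of_real r \<Longrightarrow> disc (a, b, c) = r"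
  by (metis of_real_disc of_real_eq_iff)

lemma idx_iff: "(a, b, c) \<in> idx d \<Delta> \<longleftrightarrow> b \<in> O_d d \<and> disc (a, b, c) = of_int \<Delta> \<and> a < 0"
  by (simp add: idx_def disc_def)

lemma qform_disc:
  "- of_int a * qform (a, b, c) z = disc (a, b, c) - (cmod (of_int a * z + cnj b))\<^sup>2"
proof -
  have "complex_of_real (- of_int a * qform (a, b, c) z)
      = complex_of_real (disc (a, b, c)) - (of_int a * z + cnj b) * cnj (of_int a * z + cnj b)"
    unfolding of_real_mult of_real_qform of_real_disc cqform_def by (simp add: algebra_simps)
  then show ?thesis
    by (metis complex_norm_square of_real_diff of_real_eq_iff)
qed

lemma qform_le_disc:
  assumes "a < 0" "disc (a, b, c) \<ge> 0"
  shows "qform (a, b, c) z \<le> disc (a, b, c)"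
proof (cases "qform (a, b, c) z \<le> 0")
  case False
  have "qform (a, b, c) z \<le> - of_int a * qform (a, b, c) z"
    using False assms(1) mult_right_mono[of 1 "- of_int a" "qform (a, b, c) z"] by simp
  also have "\<dots> \<le> disc (a, b, c)"
    unfolding qform_disc by simp
  finally show ?thesis .
qed (use assms in auto)

text \<open>The floor is exact whenever \<open>qform t \<beta> \<in> \<int>\<close>, e.g. for \<open>\<beta> \<in> O_d\<close> (\<open>qform_in_Ints\<close>).\<close>

definition shift_form :: "complex \<Rightarrow> form \<Rightarrow> form" where
  "shift_form \<beta> t = (case t of (a, b, c) \<Rightarrow> (a, b + of_int a * cnj \<beta>, \<lfloor>qform t \<beta>\<rfloor>))"

lemma cqform_shift_form:
  assumes "qform t \<beta> \<in> \<int>"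
  shows "cqform (shift_form \<beta> t) z = cqform t (z + \<beta>)"
proof -
  obtain a b c where t: "t = (a, b, c)"
    by (cases t) auto
  have "complex_of_int \<lfloor>qform t \<beta>\<rfloor> = cqform t \<beta>"
    using assms by (metis Ints_cases floor_of_int of_real_of_int_eq of_real_qform)
  then show ?thesis
    unfolding shift_form_def cqform_def t by (simp add: algebra_simps)
qed

lemma qform_shift_form:
  "qform t \<beta> \<in> \<int> \<Longrightarrow> qform (shift_form \<beta> t) z = qform t (z + \<beta>)"
  by (metis cqform_shift_form of_real_eq_iff of_real_qform)

lemma disc_shift_form:
  assumes "qform t \<beta> \<in> \<int>"
  shows "disc (shift_form \<beta> t) = disc t"
proof -
  obtain a b c where t: "t = (a, b, c)"
    by (cases t) auto
  have "complex_of_int \<lfloor>qform t \<beta>\<rfloor> = cqform t \<beta>"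
    using assms by (metis Ints_cases floor_of_int of_real_of_int_eq of_real_qform)
  then have "(b + of_int a * cnj \<beta>) * cnj (b + of_int a * cnj \<beta>) - of_int a * of_int \<lfloor>qform t \<beta>\<rfloor>
      = complex_of_real (disc t)"
    unfolding t cqform_def of_real_disc by (simp add: algebra_simps)
  then show ?thesis
    unfolding shift_form_def t by (simp add: disc_eqI)
qed

lemma shift_form_inverse:
  assumes "qform t \<beta> \<in> \<int>"
  shows "shift_form (- \<beta>) (shift_form \<beta> t) = t"
proof -
  obtain a b c where t: "t = (a, b, c)"
    by (cases t) auto
  have "qform (shift_form \<beta> t) (- \<beta>) = of_int c"
    using qform_shift_form[OF assms] by (simp add: t qform_zero)
  then show ?thesis
    unfolding shift_form_def[of "- \<beta>"] by (simp add: t shift_form_def)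
qed

definition flip_form :: "form \<Rightarrow> form" where
  "flip_form t = (case t of (a, b, c) \<Rightarrow> (c, - cnj b, a))"

lemma flip_form_flip_form [simp]: "flip_form (flip_form t) = t"
  by (cases t) (simp add: flip_form_def)

lemma qform_flip_form:
  assumes "z \<noteq> 0"
  shows "qform (flip_form t) z = (cmod z)\<^sup>2 * qform t (- 1 / z)"
proof -
  have "cqform (flip_form t) z = (z * cnj z) * cqform t (- 1 / z)"
    using assms unfolding cqform_def flip_form_def by (cases t) (simp add: field_simps)
  then show ?thesis
    by (metis complex_norm_square of_real_mult of_real_qform of_real_eq_iff)
qed

lemma qform_flip_form_gt:
  assumes "z \<noteq> 0" "(cmod z)\<^sup>2 \<le> \<rho>" "\<theta> \<ge> 0" "qform t z > \<theta> * \<rho>"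
  shows "qform (flip_form t) (- 1 / z) > \<theta>"
proof -
  have "(cmod z)\<^sup>2 * \<theta> \<le> \<theta> * \<rho>"
    using mult_left_mono[OF assms(2,3)] by (simp add: mult.commute)
  also have "\<dots> < qform t z"
    by (fact assms(4))
  also have "\<dots> = (cmod z)\<^sup>2 * qform (flip_form t) (- 1 / z)"
    using qform_flip_form[of "- 1 / z" t] assms(1) by (simp add: norm_divide power_divide)
  finally show ?thesis
    using assms(1) by (simp add: mult_less_cancel_left_pos)
qed

definition neg_flip_form :: "form \<Rightarrow> form" where
  "neg_flip_form t = (case t of (a, b, c) \<Rightarrow> (- c, cnj b, - a))"

lemma qform_neg_flip_form: "qform (neg_flip_form t) z = - qform (flip_form t) z"
  by (cases t) (simp add: qform_def neg_flip_form_def flip_form_def)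

definition cnj_form :: "form \<Rightarrow> form" where
  "cnj_form t = (case t of (a, b, c) \<Rightarrow> (a, cnj b, c))"

definition rotate_form :: "complex \<Rightarrow> form \<Rightarrow> form" where
  "rotate_form u t = (case t of (a, b, c) \<Rightarrow> (a, u * b, c))"

lemma qform_rotate_form:
  assumes "u * cnj u = 1"
  shows "qform (rotate_form u t) z = qform t (u * z)"
proof -
  obtain a b c where t: "t = (a, b, c)"
    by (cases t) auto
  have "cqform (rotate_form u t) z = cqform t (u * z)"
    using assms unfolding t rotate_form_def cqform_def
    by (simp add: algebra_simps)
  then show ?thesis
    by (metis of_real_eq_iff of_real_qform)
qed

lemma cqform_mult_unit:
  assumes "u * cnj u = 1"
  shows "cqform (a, b, c) (u * z)
    = (of_int a * (z * cnj z) + of_int c) + u * (b * z) + cnj u * cnj (b * z)"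
proof -
  have "of_int a * (u * z * (cnj u * cnj z)) = of_int a * (z * cnj z) * (u * cnj u)"
    by (simp add: algebra_simps)
  then show ?thesis
    unfolding cqform_def using assms by (simp add: algebra_simps)
qed

lemma qform_power3_add_uminus:
  "qform t z ^ 3 + qform t (- z) ^ 3 = 2 * (case t of (a, b, c) \<Rightarrow>
    (of_int a * (cmod z)\<^sup>2 + of_int c) ^ 3 + 6 * (of_int a * (cmod z)\<^sup>2 + of_int c)
      * (normK b * (cmod z)\<^sup>2 + Re (b\<^sup>2) * Re (z\<^sup>2) - Im (b\<^sup>2) * Im (z\<^sup>2)))"
proof -
  obtain a b c where t: "t = (a, b, c)"
    by (cases t)
  have cube: "(A + 2 * R) ^ 3 + (A - 2 * R) ^ 3 = 2 * (A ^ 3 + 6 * A * (2 * R\<^sup>2))" for A R :: real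
    by (simp add: power2_eq_square power3_eq_cube algebra_simps)
  have "qform (a, b, c) (- z) = (of_int a * (cmod z)\<^sup>2 + of_int c) - 2 * Re (b * z)"
    by (simp add: qform_eq)
  then show ?thesis
    unfolding t prod.case by (simp only: qform_eq[of a b c z] cube two_Re_mult_sq)
qed

text \<open>For a primitive sixth root of unity \<open>u\<close> and \<open>v = cnj u\<close> the six summands run over
  \<open>A + \<epsilon> X + cnj \<epsilon> Y\<close>, \<open>\<epsilon>\<^sup>6 = 1\<close>; only monomials with equal powers of \<open>X\<close> and \<open>Y\<close> survive.\<close>

lemma sixth_roots_power5_sum:
  fixes A X Y u v :: complex
  assumes "u * u = u - 1" "v = 1 - u"
  shows "(A + X + Y) ^ 5 + (A + u * X + v * Y) ^ 5 + (A + (u - 1) * X + (v - 1) * Y) ^ 5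
    + (A + - X + - Y) ^ 5 + (A + - u * X + - v * Y) ^ 5 + (A + (1 - u) * X + (1 - v) * Y) ^ 5
    = 6 * (A ^ 5 + 20 * A ^ 3 * (X * Y) + 30 * A * (X * Y) ^ 2)"
  using assms by algebra

lemma qform_power5_sum_sixth_roots:
  assumes w2: "w * w = w - 1" and cw: "cnj w = 1 - w"
  shows "qform t z ^ 5 + qform t (w * z) ^ 5 + qform t ((w - 1) * z) ^ 5 + qform t (- z) ^ 5
    + qform t (- w * z) ^ 5 + qform t ((1 - w) * z) ^ 5
    = 6 * (case t of (a, b, c) \<Rightarrow> (of_int a * (cmod z)\<^sup>2 + of_int c) ^ 5
      + 20 * (of_int a * (cmod z)\<^sup>2 + of_int c) ^ 3 * (normK b * (cmod z)\<^sup>2)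
      + 30 * (of_int a * (cmod z)\<^sup>2 + of_int c) * (normK b * (cmod z)\<^sup>2)\<^sup>2)"
    (is "?lhs = 6 * ?F")
proof -
  obtain a b c where t: "t = (a, b, c)"
    by (cases t)
  let ?A = "of_int a * (z * cnj z) + of_int c" and ?X = "b * z"
  have unit: "w * cnj w = 1" "(w - 1) * cnj (w - 1) = 1" "(- 1) * cnj (- 1) = (1 :: complex)"
    "(- w) * cnj (- w) = 1" "(1 - w) * cnj (1 - w) = 1"
    by (simp_all add: cw algebra_simps w2)
  have cqform_1: "cqform (a, b, c) z = ?A + ?X + cnj ?X"
    using cqform_mult_unit[of 1 a b c z] by simp
  have A: "?A = complex_of_real (of_int a * (cmod z)\<^sup>2 + of_int c)"
    by (simp add: complex_norm_square[symmetric] del: of_real_power)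
  have XY: "?X * cnj ?X = complex_of_real (normK b * (cmod z)\<^sup>2)"
    unfolding of_real_mult of_real_normK complex_norm_square by (simp add: mult_ac)
  have "complex_of_real ?lhs
      = (?A + ?X + cnj ?X) ^ 5 + (?A + w * ?X + cnj w * cnj ?X) ^ 5
        + (?A + (w - 1) * ?X + (cnj w - 1) * cnj ?X) ^ 5 + (?A + - ?X + - cnj ?X) ^ 5
        + (?A + - w * ?X + - cnj w * cnj ?X) ^ 5 + (?A + (1 - w) * ?X + (1 - cnj w) * cnj ?X) ^ 5"
    unfolding of_real_add of_real_power of_real_qform t
      cqform_mult_unit[OF unit(1)] cqform_mult_unit[OF unit(2)]
      cqform_mult_unit[OF unit(3), unfolded mult_minus1] cqform_mult_unit[OF unit(4)]
      cqform_mult_unit[OF unit(5)] cqform_1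
    by (simp only: complex_cnj_diff complex_cnj_minus complex_cnj_one mult_minus1)
  also have "\<dots> = 6 * (?A ^ 5 + 20 * ?A ^ 3 * (?X * cnj ?X) + 30 * ?A * (?X * cnj ?X) ^ 2)"
    by (rule sixth_roots_power5_sum[OF w2 cw])
  also have "\<dots> = complex_of_real (6 * ?F)"
    unfolding A XY t by simp
  finally show ?thesis
    using of_real_eq_iff by blast
qed

section \<open>A contraction principle\<close>

lemma periodic_inversion_invariant_eq_0:
  fixes G :: "complex \<Rightarrow> real"
  assumes cover: "\<And>z. \<exists>\<beta>\<in>B. (cmod (z - \<beta>))\<^sup>2 \<le> \<rho>" and "\<rho> < 1" "k > 0"
    and periodic: "\<And>z \<beta>. \<beta> \<in> B \<Longrightarrow> G (z + \<beta>) = G z"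
    and inversion: "\<And>z. z \<noteq> 0 \<Longrightarrow> G z = (cmod z) ^ (2 * k) * G (- 1 / z)"
    and bounded: "\<And>z. \<bar>G z\<bar> \<le> M" and "G 0 = 0"
  shows "G z = 0"
proof -
  have "\<rho> \<ge> 0"
    using cover[of 0] by (meson order_trans zero_le_power2)
  have "M \<ge> 0"
    using bounded[of 0] by simp
  have contract: "\<bar>G z\<bar> \<le> M * (\<rho> ^ k) ^ n" for n z
  proof (induction n arbitrary: z)
    case (Suc n)
    obtain \<beta> where "\<beta> \<in> B" and near: "(cmod (z - \<beta>))\<^sup>2 \<le> \<rho>"
      using cover by blast
    then have Gz: "G z = G (z - \<beta>)"
      using periodic[of \<beta> "z - \<beta>"] by simp
    show ?case
    proof (cases "z = \<beta>")
      case True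
      then show ?thesis
        using Gz \<open>G 0 = 0\<close> \<open>M \<ge> 0\<close> \<open>\<rho> \<ge> 0\<close> by simp
    next
      case False
      have "\<bar>G z\<bar> = ((cmod (z - \<beta>))\<^sup>2) ^ k * \<bar>G (- 1 / (z - \<beta>))\<bar>"
        using Gz inversion[of "z - \<beta>"] False by (simp add: abs_mult power_mult)
      also have "\<dots> \<le> \<rho> ^ k * (M * (\<rho> ^ k) ^ n)"
        using near Suc.IH \<open>\<rho> \<ge> 0\<close> by (intro mult_mono power_mono) auto
      finally show ?thesis
        by (simp add: algebra_simps)
    qed
  qed (use bounded in simp)
  have "(\<lambda>n. M * (\<rho> ^ k) ^ n) \<longlonglongrightarrow> M * 0"
    using \<open>\<rho> \<ge> 0\<close> \<open>\<rho> < 1\<close> \<open>k > 0\<close>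
    by (intro tendsto_mult_left LIMSEQ_power_zero) (simp add: power_less_one_iff)
  then have "\<bar>G z\<bar> \<le> 0"
    using LIMSEQ_le_const[of "\<lambda>n. M * (\<rho> ^ k) ^ n" 0 "\<bar>G z\<bar>"] contract by auto
  then show ?thesis
    by simp
qed

section \<open>Summability and the functional equations of \<open>H\<close>\<close>

definition H_summand :: "nat \<Rightarrow> complex \<Rightarrow> form \<Rightarrow> real" where
  "H_summand k z t = max 0 (qform t z ^ k)"

lemma H_eq_infsum: "H d k \<Delta> z = (\<Sum>\<^sub>\<infinity>t\<in>idx d \<Delta>. H_summand k z t)"
  unfolding H_def H_summand_def ..

lemma H_summand_nonneg: "H_summand k z t \<ge> 0"
  by (simp add: H_summand_def)

lemma H_summand_odd:
  assumes "odd k"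
  shows "H_summand k z t = (if qform t z > 0 then qform t z ^ k else 0)"
  using assms by (auto simp: H_summand_def max_def power_le_zero_eq zero_le_odd_power odd_pos)

lemma H_summand_flip_form:
  assumes "z \<noteq> 0"
  shows "H_summand k z (flip_form t) = (cmod z) ^ (2 * k) * H_summand k (- 1 / z) t"
  unfolding H_summand_def qform_flip_form[OF assms]
  by (simp add: power_mult_distrib power_mult max_mult_distrib_left)

locale nonnorm_disc =
  fixes d :: nat and \<Delta> :: int
  assumes d_cases: "d \<in> {1, 2, 3, 7, 11}"
    and Delta_pos: "\<Delta> > 0"
    and Delta_not_norm: "\<not> (\<exists>\<beta> \<in> O_d d. normK \<beta> = real_of_int \<Delta>)"
begin

definition pos_forms where "pos_forms = {t \<in> idx d \<Delta>. snd (snd t) > 0}"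

definition neg_forms where "neg_forms = {t \<in> idx d \<Delta>. snd (snd t) < 0}"

lemma pos_forms_iff: "(a, b, c) \<in> pos_forms \<longleftrightarrow> (a, b, c) \<in> idx d \<Delta> \<and> c > 0"
  by (simp add: pos_forms_def)

lemma neg_forms_iff: "(a, b, c) \<in> neg_forms \<longleftrightarrow> (a, b, c) \<in> idx d \<Delta> \<and> c < 0"
  by (simp add: neg_forms_def)

lemma idx_c_nonzero:
  assumes "(a, b, c) \<in> idx d \<Delta>"
  shows "c \<noteq> 0"
  using assms Delta_not_norm by (auto simp: idx_iff disc_def)

lemma idx_eq_pos_Un_neg: "idx d \<Delta> = pos_forms \<union> neg_forms"
  using idx_c_nonzero by (fastforce simp: pos_forms_def neg_forms_def)

lemma pos_neg_disjoint: "pos_forms \<inter> neg_forms = {}"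
  by (auto simp: pos_forms_def neg_forms_def)

lemma qform_le_Delta:
  assumes "t \<in> idx d \<Delta>"
  shows "qform t z \<le> of_int \<Delta>"
  using assms Delta_pos qform_le_disc[of "fst t" "fst (snd t)" "snd (snd t)" z]
  by (cases t) (simp add: idx_iff)

lemma pos_forms_bounds:
  assumes "(a, b, c) \<in> pos_forms"
  shows "a \<in> {-\<Delta>..-1}" "c \<in> {1..\<Delta>}" "b \<in> {b \<in> O_d d. normK b \<le> of_int \<Delta>}"
proof -
  have b: "b \<in> O_d d" and e: "normK b - of_int (a * c) = of_int \<Delta>" and a: "a < 0" and c: "c > 0"
    using assms by (auto simp: pos_forms_iff idx_iff disc_def)
  have "normK b \<ge> 0"
    by (simp add: normK_def)
  then have "real_of_int (- a * c) \<le> of_int \<Delta>"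
    using e by simp
  then have "- a * c \<le> \<Delta>"
    by linarith
  moreover have "-a * 1 \<le> - a * c" "1 * c \<le> - a * c"
    using a c by (intro mult_left_mono mult_right_mono; simp)+
  ultimately have "- a \<le> \<Delta>" "c \<le> \<Delta>"
    by linarith+
  then show "a \<in> {-\<Delta>..-1}" "c \<in> {1..\<Delta>}"
    using a c by auto
  have "real_of_int (a * c) < 0"
    using a c by (simp add: mult_neg_pos)
  then show "b \<in> {b \<in> O_d d. normK b \<le> of_int \<Delta>}"
    using b e by simp
qed

lemma finite_pos_forms: "finite pos_forms"
proof (rule finite_subset)
  show "pos_forms \<subseteq> {-\<Delta>..-1} \<times> {b \<in> O_d d. normK b \<le> of_int \<Delta>} \<times> {1..\<Delta>}"
  proof
    fix t
    assume t: "t \<in> pos_forms"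
    obtain a b c where "t = (a, b, c)"
      by (cases t)
    then show "t \<in> {-\<Delta>..-1} \<times> {b \<in> O_d d. normK b \<le> of_int \<Delta>} \<times> {1..\<Delta>}"
      using pos_forms_bounds[of a b c] t by blast
  qed
  show "finite ({-\<Delta>..-1} \<times> {b \<in> O_d d. normK b \<le> of_int \<Delta>} \<times> {1..\<Delta>})"
    using finite_O_d_normK_le d_cases by auto
qed

lemma shift_form_in_idx:
  assumes "\<beta> \<in> O_d d" "t \<in> idx d \<Delta>"
  shows "shift_form \<beta> t \<in> idx d \<Delta>" "qform t \<beta> \<in> \<int>"
proof -
  obtain a b c where t: "t = (a, b, c)"
    by (cases t) auto
  have b: "b \<in> O_d d"
    using assms t by (simp add: idx_iff)
  show q: "qform t \<beta> \<in> \<int>"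
    unfolding t by (rule qform_in_Ints[OF b assms(1)])
  have "b + of_int a * cnj \<beta> \<in> O_d d"
    by (intro O_d_add O_d_mult of_int_in_O_d O_d_cnj b assms(1))
  then show "shift_form \<beta> t \<in> idx d \<Delta>"
    using assms(2) disc_shift_form[OF q] unfolding t by (simp add: shift_form_def idx_iff)
qed

lemma bij_shift_form:
  assumes "\<beta> \<in> O_d d"
  shows "bij_betw (shift_form \<beta>) (idx d \<Delta>) (idx d \<Delta>)"
proof (rule bij_betw_byWitness[where f' = "shift_form (- \<beta>)"])
  have "- \<beta> \<in> O_d d"
    using assms by (rule O_d_uminus)
  then show "\<forall>t\<in>idx d \<Delta>. shift_form \<beta> (shift_form (- \<beta>) t) = t"
    using shift_form_inverse[of _ "- \<beta>"] shift_form_in_idx by fastforce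
  show "\<forall>t\<in>idx d \<Delta>. shift_form (- \<beta>) (shift_form \<beta> t) = t"
    using shift_form_inverse shift_form_in_idx assms by blast
  show "shift_form \<beta> ` idx d \<Delta> \<subseteq> idx d \<Delta>" "shift_form (- \<beta>) ` idx d \<Delta> \<subseteq> idx d \<Delta>"
    using shift_form_in_idx assms \<open>- \<beta> \<in> O_d d\<close> by blast+
qed

lemma bij_flip_form: "bij_betw flip_form neg_forms neg_forms"
  by (rule bij_betw_byWitness[where f' = flip_form])
     (auto simp: flip_form_def neg_forms_iff idx_iff disc_def O_d_uminus O_d_cnj normK_def
        mult.commute)

lemma bij_neg_flip_form: "bij_betw neg_flip_form pos_forms pos_forms"
  by (rule bij_betw_byWitness[where f' = neg_flip_form])
     (auto simp: neg_flip_form_def pos_forms_iff idx_iff disc_def O_d_cnj normK_def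
        mult.commute)

lemma bij_cnj_form: "bij_betw cnj_form pos_forms pos_forms"
  by (rule bij_betw_byWitness[where f' = cnj_form])
     (auto simp: cnj_form_def pos_forms_iff idx_iff disc_def O_d_cnj normK_def)

lemma bij_rotate_form:
  assumes "u \<in> O_d d" "u * cnj u = 1"
  shows "bij_betw (rotate_form u) pos_forms pos_forms"
proof (rule bij_betw_byWitness[where f' = "rotate_form (cnj u)"])
  have "normK u = 1"
    using assms(2) by (metis of_real_eq_1_iff of_real_normK)
  then have "normK (u * b) = normK b" "normK (cnj u * b) = normK b" for b
    by (simp_all add: normK_def norm_mult power_mult_distrib)
  then show "rotate_form u ` pos_forms \<subseteq> pos_forms" "rotate_form (cnj u) ` pos_forms \<subseteq> pos_forms"
    using assms by (auto simp: rotate_form_def pos_forms_iff idx_iff disc_def O_d_mult O_d_cnj)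
  show "\<forall>t\<in>pos_forms. rotate_form (cnj u) (rotate_form u t) = t"
       "\<forall>t\<in>pos_forms. rotate_form u (rotate_form (cnj u) t) = t"
    using assms(2) by (auto simp: rotate_form_def mult.assoc[symmetric] mult.commute[of u])
qed

lemma H_summand_le:
  assumes "odd k" "t \<in> idx d \<Delta>"
  shows "H_summand k z t \<le> of_int \<Delta> ^ k"
  using assms qform_le_Delta[OF assms(2), of z] Delta_pos
  by (auto simp: H_summand_odd intro: power_mono)

lemma sum_pos_forms_le:
  assumes "odd k" "A \<subseteq> pos_forms"
  shows "sum (H_summand k z) A \<le> card pos_forms * of_int \<Delta> ^ k"
proof -
  have "sum (H_summand k z) A \<le> sum (H_summand k z) pos_forms"
    using assms(2) finite_pos_forms by (intro sum_mono2) (auto simp: H_summand_nonneg)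
  also have "\<dots> \<le> card pos_forms * of_int \<Delta> ^ k"
    using H_summand_le[OF assms(1)] sum_bounded_above[of pos_forms "H_summand k z"]
    by (auto simp: pos_forms_def)
  finally show ?thesis .
qed

lemma H_summand_shift_form:
  assumes "\<beta> \<in> O_d d" "t \<in> idx d \<Delta>"
  shows "H_summand k z (shift_form \<beta> t) = H_summand k (z + \<beta>) t"
  using qform_shift_form[OF shift_form_in_idx(2)[OF assms]] by (simp add: H_summand_def)

lemma sum_shift_form:
  assumes "\<beta> \<in> O_d d" "X \<subseteq> idx d \<Delta>"
  shows "sum (H_summand k (z - \<beta>)) (shift_form \<beta> ` X) = sum (H_summand k z) X"
proof -
  have "inj_on (shift_form \<beta>) X"
    using bij_shift_form[OF assms(1)] assms(2) bij_betw_imp_inj_on inj_on_subset by blast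
  then have "sum (H_summand k (z - \<beta>)) (shift_form \<beta> ` X)
      = (\<Sum>t\<in>X. H_summand k (z - \<beta>) (shift_form \<beta> t))"
    by (simp add: sum.reindex)
  also have "\<dots> = sum (H_summand k z) X"
    using assms by (intro sum.cong) (auto simp: H_summand_shift_form)
  finally show ?thesis .
qed

lemma sum_neg_forms_flip:
  assumes "z \<noteq> 0"
  shows "sum (H_summand k z) Y = (cmod z) ^ (2 * k) * sum (H_summand k (- 1 / z)) (flip_form ` Y)"
proof -
  have "inj_on flip_form (flip_form ` Y)"
    by (metis flip_form_flip_form inj_on_inverseI)
  then have "sum (H_summand k z) (flip_form ` flip_form ` Y)
      = (\<Sum>t\<in>flip_form ` Y. H_summand k z (flip_form t))"
    by (simp add: sum.reindex)
  then show ?thesis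
    by (simp add: image_image H_summand_flip_form[OF assms] sum_distrib_left)
qed

definition H_bound :: "nat \<Rightarrow> real" where
  "H_bound k = card pos_forms * of_int \<Delta> ^ k / (1 - (15 / 16) ^ k)"

lemma H_bound_fixpoint:
  assumes "k > 0"
  shows "card pos_forms * of_int \<Delta> ^ k + (15 / 16) ^ k * H_bound k = H_bound k"
proof -
  have "(15 / 16 :: real) ^ k < 1"
    using assms by (simp add: power_less_one_iff)
  then show ?thesis
    unfolding H_bound_def by (simp add: field_simps)
qed

lemma H_bound_nonneg:
  assumes "k > 0"
  shows "H_bound k \<ge> 0"
proof -
  have "(15 / 16 :: real) ^ k < 1"
    using assms by (simp add: power_less_one_iff)
  then show ?thesis
    unfolding H_bound_def using Delta_pos by (intro divide_nonneg_pos) auto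
qed

lemma qform_neg_forms_zero: "t \<in> neg_forms \<Longrightarrow> qform t 0 < 0"
  by (cases t) (simp add: neg_forms_iff qform_zero)

lemma sum_neg_forms_le:
  assumes "odd k" and near: "(cmod z)\<^sup>2 \<le> 15 / 16"
    and Y: "finite Y" "Y \<subseteq> neg_forms" "\<forall>t\<in>Y. qform t z > of_int \<Delta> * (15 / 16) ^ Suc n"
    and IH: "\<And>z X. finite X \<Longrightarrow> X \<subseteq> idx d \<Delta> \<Longrightarrow> \<forall>t\<in>X. qform t z > of_int \<Delta> * (15 / 16) ^ n
      \<Longrightarrow> sum (H_summand k z) X \<le> H_bound k"
  shows "sum (H_summand k z) Y \<le> (15 / 16) ^ k * H_bound k"
proof (cases "z = 0")
  case True
  have "of_int \<Delta> * (15 / 16) ^ Suc n > (0 :: real)"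
    using Delta_pos by simp
  then have "Y = {}"
    using Y(2,3) True qform_neg_forms_zero by (meson ex_in_conv less_asym less_trans subsetD)
  then show ?thesis
    using H_bound_nonneg[of k] \<open>odd k\<close> by (simp add: odd_pos)
next
  case False
  have "(cmod z) ^ (2 * k) \<le> (15 / 16) ^ k"
    using near by (simp add: power_mult power_mono)
  moreover have "sum (H_summand k (- 1 / z)) (flip_form ` Y) \<le> H_bound k"
  proof (rule IH)
    show "finite (flip_form ` Y)"
      using Y(1) by simp
    show "flip_form ` Y \<subseteq> idx d \<Delta>"
      using Y(2) bij_flip_form idx_eq_pos_Un_neg by (auto simp: bij_betw_def)
    show "\<forall>t\<in>flip_form ` Y. qform t (- 1 / z) > of_int \<Delta> * (15 / 16) ^ n"
    proof
      fix t assume "t \<in> flip_form ` Y"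
      then obtain s where "s \<in> Y" "t = flip_form s"
        by auto
      then show "qform t (- 1 / z) > of_int \<Delta> * (15 / 16) ^ n"
        using qform_flip_form_gt[OF False near, of "of_int \<Delta> * (15 / 16) ^ n" s] Y(3) Delta_pos
        by (simp add: mult_ac)
    qed
  qed
  ultimately show ?thesis
    using sum_neg_forms_flip[OF False, of k Y] H_summand_nonneg
    by (simp add: mult_mono sum_nonneg)
qed

text \<open>After a translation into the disc \<open>|z|\<^sup>2 \<le> 15/16\<close>, the forms with \<open>c > 0\<close> contribute at
  most \<open>card pos_forms * \<Delta>^k\<close>, and inverting those with \<open>c < 0\<close> costs a factor \<open>(15/16)^k\<close> but
  lowers the threshold by one step.\<close>

lemma sum_H_summand_le_threshold:
  assumes "odd k"
  shows "finite X \<Longrightarrow> X \<subseteq> idx d \<Delta> \<Longrightarrow> \<forall>t\<in>X. qform t z > of_int \<Delta> * (15 / 16) ^ n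
    \<Longrightarrow> sum (H_summand k z) X \<le> H_bound k"
proof (induction n arbitrary: z X)
  case 0
  have "\<not> qform t z > of_int \<Delta>" if "t \<in> X" for t
    using qform_le_Delta[of t z] 0(2) that by auto
  then have "X = {}"
    using 0 by fastforce
  then show ?case
    using H_bound_nonneg assms by (simp add: odd_pos)
next
  case (Suc n)
  obtain \<beta> where \<beta>: "\<beta> \<in> O_d d" and near: "(cmod (z - \<beta>))\<^sup>2 \<le> 15 / 16"
    using O_d_covering d_cases by blast
  define X' where "X' = shift_form \<beta> ` X"
  have X': "finite X'" "X' \<subseteq> idx d \<Delta>"
    using Suc.prems shift_form_in_idx[OF \<beta>] by (auto simp: X'_def)
  have "\<forall>t\<in>X'. qform t (z - \<beta>) > of_int \<Delta> * (15 / 16) ^ Suc n"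
    using Suc.prems qform_shift_form shift_form_in_idx[OF \<beta>] by (auto simp: X'_def)
  then have above: "\<forall>t\<in>X' \<inter> neg_forms. qform t (z - \<beta>) > of_int \<Delta> * (15 / 16) ^ Suc n"
    by blast
  have "X' - pos_forms = X' \<inter> neg_forms"
    using X'(2) idx_eq_pos_Un_neg pos_neg_disjoint by blast
  have "sum (H_summand k z) X = sum (H_summand k (z - \<beta>)) X'"
    using sum_shift_form[OF \<beta> Suc.prems(2)] by (simp add: X'_def)
  also have "\<dots> = sum (H_summand k (z - \<beta>)) (X' \<inter> pos_forms)
      + sum (H_summand k (z - \<beta>)) (X' \<inter> neg_forms)"
    using sum.Int_Diff[OF X'(1), of _ pos_forms] \<open>X' - pos_forms = X' \<inter> neg_forms\<close> by simp
  also have "\<dots> \<le> card pos_forms * of_int \<Delta> ^ k + (15 / 16) ^ k * H_bound k"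
  proof (rule add_mono)
    show "sum (H_summand k (z - \<beta>)) (X' \<inter> pos_forms) \<le> card pos_forms * of_int \<Delta> ^ k"
      by (rule sum_pos_forms_le[OF assms]) blast
    show "sum (H_summand k (z - \<beta>)) (X' \<inter> neg_forms) \<le> (15 / 16) ^ k * H_bound k"
      by (rule sum_neg_forms_le[OF assms near _ _ above Suc.IH]) (use X'(1) in auto)
  qed
  also have "\<dots> = H_bound k"
    using H_bound_fixpoint assms by (simp add: odd_pos)
  finally show ?case .
qed

lemma sum_H_summand_le:
  assumes "odd k" "finite X" "X \<subseteq> idx d \<Delta>"
  shows "sum (H_summand k z) X \<le> H_bound k"
proof -
  define Xpos where "Xpos = {t \<in> X. qform t z > 0}"
  have "(\<lambda>n. of_int \<Delta> * (15 / 16) ^ n) \<longlonglongrightarrow> of_int \<Delta> * (0 :: real)"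
    by (intro tendsto_mult_left LIMSEQ_power_zero) simp
  then have "\<forall>t\<in>Xpos. \<forall>\<^sub>F n in sequentially. of_int \<Delta> * (15 / 16) ^ n < qform t z"
    unfolding Xpos_def by (auto intro: order_tendstoD(2))
  then have "\<forall>\<^sub>F n in sequentially. \<forall>t\<in>Xpos. of_int \<Delta> * (15 / 16) ^ n < qform t z"
    using assms(2) by (intro eventually_ball_finite) (auto simp: Xpos_def)
  then obtain n where "\<forall>t\<in>Xpos. of_int \<Delta> * (15 / 16) ^ n < qform t z"
    by (auto simp: eventually_sequentially)
  then have "sum (H_summand k z) Xpos \<le> H_bound k"
    using assms by (intro sum_H_summand_le_threshold) (auto simp: Xpos_def)
  moreover have "sum (H_summand k z) X = sum (H_summand k z) Xpos"
    using assms by (intro sum.mono_neutral_right) (auto simp: Xpos_def H_summand_odd)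
  ultimately show ?thesis
    by simp
qed

lemma summable_H_summand:
  assumes "odd k"
  shows "H_summand k z summable_on idx d \<Delta>"
  using sum_H_summand_le[OF assms]
  by (intro nonneg_bdd_above_summable_on bdd_aboveI[of _ "H_bound k"]) (auto simp: H_summand_nonneg)

lemma H_bounds:
  assumes "odd k"
  shows "0 \<le> H d k \<Delta> z" "H d k \<Delta> z \<le> H_bound k"
  unfolding H_eq_infsum
  using infsum_le_finite_sums[OF summable_H_summand[OF assms]] sum_H_summand_le[OF assms]
  by (auto intro: infsum_nonneg simp: H_summand_nonneg)

lemma H_shift:
  assumes "\<beta> \<in> O_d d"
  shows "H d k \<Delta> (z + \<beta>) = H d k \<Delta> z"
proof -
  have "H d k \<Delta> (z + \<beta>) = (\<Sum>\<^sub>\<infinity>t\<in>idx d \<Delta>. H_summand k z (shift_form \<beta> t))"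
    unfolding H_eq_infsum using assms by (intro infsum_cong) (simp add: H_summand_shift_form)
  also have "\<dots> = H d k \<Delta> z"
    unfolding H_eq_infsum by (rule infsum_reindex_bij_betw[OF bij_shift_form[OF assms]])
  finally show ?thesis .
qed

lemma H_eq_pos_neg:
  assumes "odd k"
  shows "H d k \<Delta> z = sum (H_summand k z) pos_forms + (\<Sum>\<^sub>\<infinity>t\<in>neg_forms. H_summand k z t)"
proof -
  have "H_summand k z summable_on pos_forms" "H_summand k z summable_on neg_forms"
    using summable_on_subset_banach[OF summable_H_summand[OF assms]] idx_eq_pos_Un_neg by auto
  from infsum_Un_disjoint[OF this pos_neg_disjoint] show ?thesis
    unfolding H_eq_infsum idx_eq_pos_Un_neg using finite_pos_forms by simp
qed

lemma infsum_neg_forms_flip: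
  assumes "z \<noteq> 0"
  shows "(\<Sum>\<^sub>\<infinity>t\<in>neg_forms. H_summand k z t)
    = (cmod z) ^ (2 * k) * (\<Sum>\<^sub>\<infinity>t\<in>neg_forms. H_summand k (- 1 / z) t)"
proof -
  have "(\<Sum>\<^sub>\<infinity>t\<in>neg_forms. H_summand k z t) = (\<Sum>\<^sub>\<infinity>t\<in>neg_forms. H_summand k z (flip_form t))"
    by (rule infsum_reindex_bij_betw[OF bij_flip_form, symmetric])
  then show ?thesis
    by (simp add: H_summand_flip_form[OF assms] infsum_cmult_right')
qed

definition Psum :: "nat \<Rightarrow> complex \<Rightarrow> real" where
  "Psum k z = (\<Sum>t\<in>pos_forms. qform t z ^ k)"

lemma sum_pos_forms_inversion:
  assumes "odd k" "z \<noteq> 0"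
  shows "(cmod z) ^ (2 * k) * sum (H_summand k (- 1 / z)) pos_forms
    = (\<Sum>t\<in>pos_forms. max 0 (- (qform t z ^ k)))"
proof -
  have "(cmod z) ^ (2 * k) * sum (H_summand k (- 1 / z)) pos_forms
      = (\<Sum>t\<in>pos_forms. H_summand k z (flip_form t))"
    by (simp add: H_summand_flip_form[OF assms(2)] sum_distrib_left)
  also have "\<dots> = (\<Sum>t\<in>pos_forms. max 0 (- (qform (neg_flip_form t) z ^ k)))"
    using assms(1) by (simp add: H_summand_def qform_neg_flip_form power_minus_odd)
  also have "\<dots> = (\<Sum>t\<in>pos_forms. max 0 (- (qform t z ^ k)))"
    by (rule sum.reindex_bij_betw[OF bij_neg_flip_form])
  finally show ?thesis .
qed

lemma H_inversion:
  assumes "odd k" "z \<noteq> 0"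
  shows "H d k \<Delta> z - (cmod z) ^ (2 * k) * H d k \<Delta> (- 1 / z) = Psum k z"
proof -
  have "H d k \<Delta> z - (cmod z) ^ (2 * k) * H d k \<Delta> (- 1 / z)
      = sum (H_summand k z) pos_forms - (cmod z) ^ (2 * k) * sum (H_summand k (- 1 / z)) pos_forms"
    unfolding H_eq_pos_neg[OF assms(1)] infsum_neg_forms_flip[OF assms(2)]
    by (simp add: algebra_simps)
  also have "\<dots> = (\<Sum>t\<in>pos_forms. max 0 (qform t z ^ k) - max 0 (- (qform t z ^ k)))"
    unfolding sum_pos_forms_inversion[OF assms] sum_subtractf H_summand_def ..
  also have "\<dots> = Psum k z"
    unfolding Psum_def by (intro sum.cong) auto
  finally show ?thesis .
qed

lemma alpha_eq_Psum_0:
  assumes "odd k"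
  shows "alpha d k \<Delta> = Psum k 0"
proof -
  have "(\<Sum>\<^sub>\<infinity>t\<in>neg_forms. H_summand k 0 t) = 0"
    using assms by (intro infsum_0) (auto simp: neg_forms_def H_summand_odd qform_zero)
  moreover have "sum (H_summand k 0) pos_forms = Psum k 0"
    unfolding Psum_def using assms
    by (intro sum.cong) (auto simp: pos_forms_def H_summand_odd qform_zero)
  ultimately show ?thesis
    unfolding alpha_def H_eq_pos_neg[OF assms] by simp
qed

lemma H_eq_alpha_if_Psum_eq:
  assumes "odd k" and Psum: "\<And>z. Psum k z = alpha d k \<Delta> * (1 - (cmod z) ^ (2 * k))"
  shows "H d k \<Delta> z = alpha d k \<Delta>"
proof -
  let ?G = "\<lambda>z. H d k \<Delta> z - alpha d k \<Delta>"
  have "?G z = 0"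
  proof (rule periodic_inversion_invariant_eq_0)
    show "\<exists>\<beta>\<in>O_d d. (cmod (z - \<beta>))\<^sup>2 \<le> 15 / 16" for z
      using O_d_covering d_cases by blast
    show "?G (z + \<beta>) = ?G z" if "\<beta> \<in> O_d d" for z \<beta>
      using H_shift[OF that] by simp
    show "?G z = (cmod z) ^ (2 * k) * ?G (- 1 / z)" if "z \<noteq> 0" for z
      using H_inversion[OF assms(1) that] Psum[of z] by (simp add: algebra_simps)
    show "\<bar>?G z\<bar> \<le> H_bound k" for z
      using H_bounds[OF assms(1), of z] H_bounds[OF assms(1), of 0] by (simp add: alpha_def)
  qed (use assms in \<open>auto simp: alpha_def odd_pos\<close>)
  then show ?thesis
    by simp
qed

section \<open>The defect polynomial\<close>

lemma Psum_rotate: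
  assumes "u \<in> O_d d" "u * cnj u = 1"
  shows "Psum k (u * z) = Psum k z"
proof -
  have "Psum k (u * z) = (\<Sum>t\<in>pos_forms. qform (rotate_form u t) z ^ k)"
    unfolding Psum_def qform_rotate_form[OF assms(2)] ..
  also have "\<dots> = Psum k z"
    unfolding Psum_def by (rule sum.reindex_bij_betw[OF bij_rotate_form[OF assms]])
  finally show ?thesis .
qed

lemma Psum_uminus: "Psum k (- z) = Psum k z"
  using Psum_rotate[of "- 1" k z] O_d_uminus[OF one_in_O_d] by simp

lemma H_step:
  assumes "odd k" "\<beta> \<in> O_d d" "z + \<beta> = v" "v * z' = - 1"
  shows "H d k \<Delta> z = Psum k v + ((cmod v)\<^sup>2) ^ k * H d k \<Delta> z'"
proof -
  have "v \<noteq> 0"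
    using assms(4) by auto
  have "H d k \<Delta> z = H d k \<Delta> v"
    using H_shift[OF assms(2), of k z] assms(3) by simp
  also have "\<dots> = Psum k v + (cmod v) ^ (2 * k) * H d k \<Delta> (- 1 / v)"
    using H_inversion[OF assms(1) \<open>v \<noteq> 0\<close>] by linarith
  also have "- 1 / v = z'"
    using assms(4) \<open>v \<noteq> 0\<close> by (simp add: field_simps mult.commute)
  finally show ?thesis
    by (simp add: power_mult)
qed

lemma Psum_three_term:
  assumes "odd k" "z \<noteq> 0" "z \<noteq> - 1"
  shows "Psum k (z + 1) + ((cmod (z + 1))\<^sup>2) ^ k * Psum k (z / (z + 1))
    + ((cmod z)\<^sup>2) ^ k * Psum k (- 1 / z) = 0"
proof -
  have "z + 1 \<noteq> 0"
    using assms(3) by (auto simp: add_eq_0_iff2)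
  note step = H_step[OF assms(1) one_in_O_d]
  have e\<^sub>1: "H d k \<Delta> z = Psum k (z + 1) + ((cmod (z + 1))\<^sup>2) ^ k * H d k \<Delta> (- 1 / (z + 1))"
    by (rule step) (use \<open>z + 1 \<noteq> 0\<close> in auto)
  have e\<^sub>2: "H d k \<Delta> (- 1 / (z + 1))
      = Psum k (z / (z + 1)) + ((cmod (z / (z + 1)))\<^sup>2) ^ k * H d k \<Delta> (- 1 / (z / (z + 1)))"
    by (rule step, use \<open>z + 1 \<noteq> 0\<close> in \<open>simp add: field_simps\<close>,
        use \<open>z + 1 \<noteq> 0\<close> assms(2) in \<open>simp add: divide_eq_eq\<close>)
  have e\<^sub>3: "H d k \<Delta> (- 1 / (z / (z + 1)))
      = Psum k (- 1 / z) + ((cmod (- 1 / z))\<^sup>2) ^ k * H d k \<Delta> z"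
    by (rule step) (use \<open>z + 1 \<noteq> 0\<close> assms(2) in \<open>auto simp: field_simps\<close>)
  have n\<^sub>1\<^sub>2: "((cmod (z + 1))\<^sup>2) ^ k * ((cmod (z / (z + 1)))\<^sup>2) ^ k = ((cmod z)\<^sup>2) ^ k"
    using \<open>z + 1 \<noteq> 0\<close> by (simp add: norm_divide power_divide)
  have n\<^sub>3: "((cmod z)\<^sup>2) ^ k * ((cmod (- 1 / z))\<^sup>2) ^ k = 1"
    using assms(2) by (simp add: norm_divide power_divide)
  have "p\<^sub>1 + A * (p\<^sub>2 + B * (p\<^sub>3 + C * h)) = p\<^sub>1 + A * p\<^sub>2 + (A * B) * p\<^sub>3 + ((A * B) * C) * h"
    for p\<^sub>1 p\<^sub>2 p\<^sub>3 A B C h :: real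
    by (simp add: algebra_simps)
  from e\<^sub>1[unfolded e\<^sub>2 e\<^sub>3, unfolded this n\<^sub>1\<^sub>2 n\<^sub>3] show ?thesis
    by simp
qed

lemma Psum_three_term_radial:
  assumes "odd k" and radial: "\<And>z. Psum k z = f ((cmod z)\<^sup>2)" and "y \<noteq> 0"
  shows "f (1 + y\<^sup>2) + (1 + y\<^sup>2) ^ k * f (y\<^sup>2 / (1 + y\<^sup>2)) + (y\<^sup>2) ^ k * f (1 / y\<^sup>2) = 0"
proof -
  let ?z = "Complex 0 y"
  have "?z \<noteq> 0" "?z \<noteq> - 1"
    using \<open>y \<noteq> 0\<close> by (simp_all add: complex_eq_iff)
  moreover have "(cmod (?z + 1))\<^sup>2 = 1 + y\<^sup>2" "(cmod (?z / (?z + 1)))\<^sup>2 = y\<^sup>2 / (1 + y\<^sup>2)"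
    "(cmod (- 1 / ?z))\<^sup>2 = 1 / y\<^sup>2" "(cmod ?z)\<^sup>2 = y\<^sup>2"
    by (simp_all add: cmod_power2 norm_divide power_divide)
  ultimately show ?thesis
    using Psum_three_term[OF assms(1), of ?z] unfolding radial by simp
qed

lemma Psum_closed_chain4:
  assumes "odd k" and \<beta>: "\<beta>\<^sub>1 \<in> O_d d" "\<beta>\<^sub>2 \<in> O_d d" "\<beta>\<^sub>3 \<in> O_d d" "\<beta>\<^sub>4 \<in> O_d d"
    and chain: "z\<^sub>1 + \<beta>\<^sub>1 = v\<^sub>1" "v\<^sub>1 * z\<^sub>2 = - 1" "z\<^sub>2 + \<beta>\<^sub>2 = v\<^sub>2" "v\<^sub>2 * z\<^sub>3 = - 1"
      "z\<^sub>3 + \<beta>\<^sub>3 = v\<^sub>3" "v\<^sub>3 * z\<^sub>4 = - 1" "z\<^sub>4 + \<beta>\<^sub>4 = v\<^sub>4" "v\<^sub>4 * z\<^sub>1 = - 1"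
    and n: "(cmod v\<^sub>1)\<^sup>2 * (cmod v\<^sub>2)\<^sup>2 * (cmod v\<^sub>3)\<^sup>2 * (cmod v\<^sub>4)\<^sup>2 = 1"
  shows "Psum k v\<^sub>1 + ((cmod v\<^sub>1)\<^sup>2) ^ k * Psum k v\<^sub>2
    + ((cmod v\<^sub>1)\<^sup>2 * (cmod v\<^sub>2)\<^sup>2) ^ k * Psum k v\<^sub>3
    + ((cmod v\<^sub>1)\<^sup>2 * (cmod v\<^sub>2)\<^sup>2 * (cmod v\<^sub>3)\<^sup>2) ^ k * Psum k v\<^sub>4 = 0"
proof -
  have "p1 + A * (p2 + B * (p3 + C * (p4 + D * h)))
      = p1 + A * p2 + (A * B) * p3 + (A * B * C) * p4 + (A * B * C * D) * h"
    for p1 p2 p3 p4 A B C D h :: real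
    by (simp add: algebra_simps)
  from H_step[OF assms(1) \<beta>(1) chain(1,2), unfolded H_step[OF assms(1) \<beta>(2) chain(3,4)]
      H_step[OF assms(1) \<beta>(3) chain(5,6)] H_step[OF assms(1) \<beta>(4) chain(7,8)], unfolded this]
  show ?thesis
    using n by (simp add: power_mult_distrib[symmetric])
qed

lemma sum_pos_forms_neg_flip:
  "(\<Sum>(a, b, c)\<in>pos_forms. f a b c) = (\<Sum>(a, b, c)\<in>pos_forms. f (- c) (cnj b) (- a))"
proof -
  have "(\<Sum>t\<in>pos_forms. (\<lambda>(a, b, c). f a b c) (neg_flip_form t))
      = (\<Sum>t\<in>pos_forms. (\<lambda>(a, b, c). f a b c) t)"
    by (rule sum.reindex_bij_betw[OF bij_neg_flip_form])
  moreover have "(\<lambda>(a, b, c). f a b c) (neg_flip_form t) = (\<lambda>(a, b, c). f (- c) (cnj b) (- a)) t"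
    for t
    by (cases t) (simp add: neg_flip_form_def)
  ultimately show ?thesis
    by simp
qed

lemma sum_pos_forms_cnj:
  "(\<Sum>(a, b, c)\<in>pos_forms. f a b c) = (\<Sum>(a, b, c)\<in>pos_forms. f a (cnj b) c)"
proof -
  have "(\<Sum>t\<in>pos_forms. (\<lambda>(a, b, c). f a b c) (cnj_form t))
      = (\<Sum>t\<in>pos_forms. (\<lambda>(a, b, c). f a b c) t)"
    by (rule sum.reindex_bij_betw[OF bij_cnj_form])
  moreover have "(\<lambda>(a, b, c). f a b c) (cnj_form t) = (\<lambda>(a, b, c). f a (cnj b) c) t" for t
    by (cases t) (simp add: cnj_form_def)
  ultimately show ?thesis
    by simp
qed

lemma Psum_eq_sum_triples: "Psum k z = (\<Sum>(a, b, c)\<in>pos_forms. qform (a, b, c) z ^ k)"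
  unfolding Psum_def by (simp add: case_prod_unfold)

lemma alpha_eq_sum_c:
  assumes "odd k"
  shows "alpha d k \<Delta> = (\<Sum>(a, b, c)\<in>pos_forms. of_int c ^ k)"
  unfolding alpha_eq_Psum_0[OF assms] Psum_eq_sum_triples by (simp add: qform_zero)

lemma Psum_1: "Psum 1 z = alpha d 1 \<Delta> * (1 - (cmod z)\<^sup>2)"
proof -
  have "2 * Psum 1 z = Psum 1 z + Psum 1 (- z)"
    by (simp add: Psum_uminus)
  also have "\<dots> = (\<Sum>(a, b, c)\<in>pos_forms. 2 * (of_int a * (cmod z)\<^sup>2 + of_int c))"
    unfolding Psum_eq_sum_triples sum.distrib[symmetric] by (simp add: qform_eq case_prod_unfold)
  also have "\<dots> = 2 * ((\<Sum>(a, b, c)\<in>pos_forms. of_int a) * (cmod z)\<^sup>2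
      + (\<Sum>(a, b, c)\<in>pos_forms. of_int c))"
    by (simp add: case_prod_unfold sum.distrib sum_distrib_left sum_distrib_right)
  also have "(\<Sum>(a, b, c)\<in>pos_forms. real_of_int a) = - (\<Sum>(a, b, c)\<in>pos_forms. of_int c)"
    by (subst sum_pos_forms_neg_flip) (simp add: case_prod_unfold sum_negf)
  finally show ?thesis
    using alpha_eq_sum_c[of 1] by (simp add: algebra_simps)
qed

lemma Psum_3_expansion:
  "Psum 3 z = (\<Sum>(a, b, c)\<in>pos_forms. (of_int a * (cmod z)\<^sup>2 + of_int c) ^ 3
    + 6 * (of_int a * (cmod z)\<^sup>2 + of_int c)
      * (normK b * (cmod z)\<^sup>2 + Re (b\<^sup>2) * Re (z\<^sup>2) - Im (b\<^sup>2) * Im (z\<^sup>2)))"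
proof -
  have "2 * Psum 3 z = (\<Sum>t\<in>pos_forms. qform t z ^ 3 + qform t (- z) ^ 3)"
    unfolding sum.distrib by (simp add: Psum_def[symmetric] Psum_uminus)
  then show ?thesis
    unfolding qform_power3_add_uminus sum_distrib_left[symmetric] by simp
qed

lemma sum_pos_forms_cubic:
  "(\<Sum>(a, b, c)\<in>pos_forms. (of_int a * r + of_int c) ^ 3
    + 6 * (of_int a * r + of_int c) * (normK b * r + Re (b\<^sup>2) * X - Im (b\<^sup>2) * Y))
  = (\<Sum>(a, b, c)\<in>pos_forms. of_int c ^ 3)
    + (\<Sum>(a, b, c)\<in>pos_forms. 3 * of_int a * of_int c ^ 2 + 6 * of_int c * normK b) * r
    + (\<Sum>(a, b, c)\<in>pos_forms. 3 * of_int a ^ 2 * of_int c + 6 * of_int a * normK b) * r\<^sup>2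
    + (\<Sum>(a, b, c)\<in>pos_forms. of_int a ^ 3) * r ^ 3
    + 6 * ((\<Sum>(a, b, c)\<in>pos_forms. of_int c * Re (b\<^sup>2))
      + (\<Sum>(a, b, c)\<in>pos_forms. of_int a * Re (b\<^sup>2)) * r) * X
    - 6 * ((\<Sum>(a, b, c)\<in>pos_forms. of_int c * Im (b\<^sup>2))
      + (\<Sum>(a, b, c)\<in>pos_forms. of_int a * Im (b\<^sup>2)) * r) * Y"
  by (simp add: case_prod_unfold sum.distrib sum_subtractf sum_distrib_left sum_distrib_right
      power2_eq_square power3_eq_cube algebra_simps)

lemma Psum_3_form:
  obtains p q where "\<And>z. Psum 3 z = alpha d 3 \<Delta> * (1 - ((cmod z)\<^sup>2) ^ 3)
    + p * ((cmod z)\<^sup>2 - ((cmod z)\<^sup>2)\<^sup>2) + q * (1 - (cmod z)\<^sup>2) * Re (z\<^sup>2)"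
proof -
  define p where "p = (\<Sum>(a, b, c)\<in>pos_forms. 3 * of_int a * of_int c ^ 2 + 6 * of_int c * normK b)"
  define q where "q = 6 * (\<Sum>(a, b, c)\<in>pos_forms. of_int c * Re (b\<^sup>2))"
  have a3: "(\<Sum>(a, b, c)\<in>pos_forms. of_int a ^ 3) = - (\<Sum>(a, b, c)\<in>pos_forms. real_of_int c ^ 3)"
    by (subst sum_pos_forms_neg_flip) (simp add: case_prod_unfold sum_negf)
  have a2: "(\<Sum>(a, b, c)\<in>pos_forms. 3 * of_int a ^ 2 * of_int c + 6 * of_int a * normK b) = - p"
    unfolding p_def
    by (subst sum_pos_forms_neg_flip) (simp add: case_prod_unfold sum_negf[symmetric] mult_ac)
  have re: "(\<Sum>(a, b, c)\<in>pos_forms. of_int a * Re (b\<^sup>2))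
      = - (\<Sum>(a, b, c)\<in>pos_forms. of_int c * Re (b\<^sup>2))"
    by (subst sum_pos_forms_neg_flip) (simp add: case_prod_unfold sum_negf)
  have "(\<Sum>(a, b, c)\<in>pos_forms. of_int c * Im (b\<^sup>2)) = - (\<Sum>(a, b, c)\<in>pos_forms. of_int c * Im (b\<^sup>2))"
    by (subst sum_pos_forms_cnj) (simp add: case_prod_unfold sum_negf)
  then have im_c: "(\<Sum>(a, b, c)\<in>pos_forms. of_int c * Im (b\<^sup>2)) = 0"
    by simp
  have im_a: "(\<Sum>(a, b, c)\<in>pos_forms. of_int a * Im (b\<^sup>2)) = 0"
    by (subst sum_pos_forms_neg_flip)
      (simp add: case_prod_unfold sum_negf im_c[unfolded case_prod_unfold])
  show ?thesis
  proof
    show "Psum 3 z = alpha d 3 \<Delta> * (1 - ((cmod z)\<^sup>2) ^ 3)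
      + p * ((cmod z)\<^sup>2 - ((cmod z)\<^sup>2)\<^sup>2) + q * (1 - (cmod z)\<^sup>2) * Re (z\<^sup>2)" for z
      unfolding Psum_3_expansion sum_pos_forms_cubic a3 a2 re im_c im_a
        alpha_eq_sum_c[of 3, simplified]
      by (simp add: p_def q_def algebra_simps)
  qed
qed

lemma Psum_3_eq_if_radial:
  assumes "\<And>z. Psum 3 z = alpha d 3 \<Delta> * (1 - ((cmod z)\<^sup>2) ^ 3) + p * ((cmod z)\<^sup>2 - ((cmod z)\<^sup>2)\<^sup>2)"
  shows "Psum 3 z = alpha d 3 \<Delta> * (1 - (cmod z) ^ (2 * 3))"
proof -
  have "12 * p = 0"
    using Psum_three_term_radial[OF _ assms, of 2] by (simp add: power_divide algebra_simps)
  then show ?thesis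
    using assms[of z] by (simp add: power_mult)
qed

lemma Psum_3_eq_if_unit:
  assumes "u \<in> O_d d" "u * cnj u = 1" "Re (u\<^sup>2) \<noteq> 1"
  shows "Psum 3 z = alpha d 3 \<Delta> * (1 - (cmod z) ^ (2 * 3))"
proof -
  obtain p q where form: "\<And>z. Psum 3 z = alpha d 3 \<Delta> * (1 - ((cmod z)\<^sup>2) ^ 3)
    + p * ((cmod z)\<^sup>2 - ((cmod z)\<^sup>2)\<^sup>2) + q * (1 - (cmod z)\<^sup>2) * Re (z\<^sup>2)"
    using Psum_3_form by blast
  have "(cmod u)\<^sup>2 = 1"
    using assms(2) by (metis complex_norm_square of_real_eq_1_iff)
  then have "(cmod (u * 2))\<^sup>2 = 4" "Re ((u * 2)\<^sup>2) = 4 * Re (u\<^sup>2)"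
    by (simp_all add: norm_mult power_mult_distrib)
  then have "q * (Re (u\<^sup>2) - 1) = 0"
    using Psum_rotate[OF assms(1,2), of 3 2] unfolding form by (simp add: algebra_simps)
  then have "q = 0"
    using assms(3) by simp
  then show ?thesis
    by (intro Psum_3_eq_if_radial[of p]) (simp add: form)
qed

lemma Psum_3_d13:
  assumes "d \<in> {1, 3}"
  shows "Psum 3 z = alpha d 3 \<Delta> * (1 - (cmod z) ^ (2 * 3))"
proof (rule Psum_3_eq_if_unit[OF omega_d_in_O_d])
  show "omega_d d * cnj (omega_d d) = 1"
    using assms by (auto simp: omega_d_mult_cnj omega_norm_def)
  have "Re ((omega_d d)\<^sup>2) = of_int (omega_trace d) ^ 2 / 2 - of_int (omega_norm d)"
    by (simp add: power2_eq_square omega_d_mult_self Re_omega_d)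
  then show "Re ((omega_d d)\<^sup>2) \<noteq> 1"
    using assms by (auto simp: omega_trace_def omega_norm_def)
qed

lemma Psum_3_d7:
  assumes "d = 7"
  shows "Psum 3 z = alpha d 3 \<Delta> * (1 - (cmod z) ^ (2 * 3))"
proof -
  obtain p q where form: "\<And>z. Psum 3 z = alpha d 3 \<Delta> * (1 - ((cmod z)\<^sup>2) ^ 3)
    + p * ((cmod z)\<^sup>2 - ((cmod z)\<^sup>2)\<^sup>2) + q * (1 - (cmod z)\<^sup>2) * Re (z\<^sup>2)"
    using Psum_3_form by blast
  txt \<open>A closed cycle \<open>z \<mapsto> -1/(z + \<beta>)\<close> through \<open>\<i> sqrt 7\<close>, with \<open>\<beta>\<close> alternately \<open>\<omega>\<close> and
    \<open>1 - \<omega>\<close>; along it the \<open>p\<close>-terms cancel but the \<open>q\<close>-terms do not.\<close>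
  have w: "omega_d d = Complex (1 / 2) (sqrt 7 / 2)"
    using assms by (simp add: omega_d_def complex_eq_iff)
  have "1 - omega_d d \<in> O_d d"
    by (intro O_d_diff one_in_O_d omega_d_in_O_d)
  have cm: "(cmod (Complex x (y * sqrt 7)))\<^sup>2 = x\<^sup>2 + 7 * y\<^sup>2" for x y
    by (simp add: cmod_power2 power_mult_distrib)
  have re: "Re ((Complex x (y * sqrt 7))\<^sup>2) = x\<^sup>2 - 7 * y\<^sup>2" for x y
    by (simp add: power2_eq_square)
  let ?v\<^sub>1 = "Complex (1 / 2) (3 / 2 * sqrt 7)" and ?v\<^sub>2 = "Complex (15 / 32) (- 13 / 32 * sqrt 7)"
    and ?v\<^sub>3 = "Complex (7 / 44) (9 / 44 * sqrt 7)" and ?v\<^sub>4 = "Complex 0 (1 / 7 * sqrt 7)"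
  have norms: "(cmod ?v\<^sub>1)\<^sup>2 = 16" "(cmod ?v\<^sub>2)\<^sup>2 = 11 / 8" "(cmod ?v\<^sub>3)\<^sup>2 = 7 / 22"
    "(cmod ?v\<^sub>4)\<^sup>2 = 1 / 7"
    unfolding cm by (simp_all add: power_divide)
  have "Psum 3 ?v\<^sub>1 + ((cmod ?v\<^sub>1)\<^sup>2) ^ 3 * Psum 3 ?v\<^sub>2
    + ((cmod ?v\<^sub>1)\<^sup>2 * (cmod ?v\<^sub>2)\<^sup>2) ^ 3 * Psum 3 ?v\<^sub>3
    + ((cmod ?v\<^sub>1)\<^sup>2 * (cmod ?v\<^sub>2)\<^sup>2 * (cmod ?v\<^sub>3)\<^sup>2) ^ 3 * Psum 3 ?v\<^sub>4 = 0"
  proof (rule Psum_closed_chain4[where z\<^sub>1 = "Complex 0 (sqrt 7)"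
          and z\<^sub>2 = "Complex (- 1 / 32) (3 / 32 * sqrt 7)"
          and z\<^sub>3 = "Complex (- 15 / 44) (- 13 / 44 * sqrt 7)"
          and z\<^sub>4 = "Complex (- 1 / 2) (9 / 14 * sqrt 7)",
          OF _ omega_d_in_O_d \<open>1 - omega_d d \<in> O_d d\<close> omega_d_in_O_d \<open>1 - omega_d d \<in> O_d d\<close>])
    show "(cmod ?v\<^sub>1)\<^sup>2 * (cmod ?v\<^sub>2)\<^sup>2 * (cmod ?v\<^sub>3)\<^sup>2 * (cmod ?v\<^sub>4)\<^sup>2 = 1"
      unfolding norms by simp
  qed (simp_all add: w complex_eq_iff field_simps)
  then have "q * (- 315) = 0"
    unfolding form norms re by (simp add: power_divide algebra_simps)
  then show ?thesis
    by (intro Psum_3_eq_if_radial[of p]) (simp add: form)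
qed

lemma Psum_5_expansion:
  assumes "d = 3"
  shows "Psum 5 z = (\<Sum>(a, b, c)\<in>pos_forms. (of_int a * (cmod z)\<^sup>2 + of_int c) ^ 5
    + 20 * (of_int a * (cmod z)\<^sup>2 + of_int c) ^ 3 * (normK b * (cmod z)\<^sup>2)
    + 30 * (of_int a * (cmod z)\<^sup>2 + of_int c) * (normK b * (cmod z)\<^sup>2)\<^sup>2)"
proof -
  let ?w = "omega_d d"
  have w2: "?w * ?w = ?w - 1" and cw: "cnj ?w = 1 - ?w"
    using omega_d_mult_self[of d] cnj_omega_d[of d] assms
    by (simp_all add: omega_trace_def omega_norm_def)
  have "?w * cnj ?w = 1" "(?w - 1) * cnj (?w - 1) = 1" "(- ?w) * cnj (- ?w) = 1"
    "(1 - ?w) * cnj (1 - ?w) = 1"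
    by (simp_all add: cw algebra_simps w2)
  moreover have "?w - 1 \<in> O_d d" "- ?w \<in> O_d d" "1 - ?w \<in> O_d d"
    by (intro O_d_diff O_d_uminus one_in_O_d omega_d_in_O_d)+
  ultimately have "6 * Psum 5 z = (\<Sum>t\<in>pos_forms. qform t z ^ 5 + qform t (?w * z) ^ 5
      + qform t ((?w - 1) * z) ^ 5 + qform t (- z) ^ 5 + qform t (- ?w * z) ^ 5
      + qform t ((1 - ?w) * z) ^ 5)"
    unfolding sum.distrib Psum_def[symmetric]
    by (simp add: Psum_rotate omega_d_in_O_d Psum_uminus)
  then show ?thesis
    unfolding qform_power5_sum_sixth_roots[OF w2 cw] sum_distrib_left[symmetric] by simp
qed

lemma sum_pos_forms_quintic:
  "(\<Sum>(a, b, c)\<in>pos_forms. (of_int a * r + of_int c) ^ 5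
    + 20 * (of_int a * r + of_int c) ^ 3 * (normK b * r)
    + 30 * (of_int a * r + of_int c) * (normK b * r)\<^sup>2)
  = (\<Sum>(a, b, c)\<in>pos_forms. of_int c ^ 5)
    + (\<Sum>(a, b, c)\<in>pos_forms. 5 * of_int a * of_int c ^ 4 + 20 * of_int c ^ 3 * normK b) * r
    + (\<Sum>(a, b, c)\<in>pos_forms. 10 * of_int a ^ 2 * of_int c ^ 3
        + 60 * of_int a * of_int c ^ 2 * normK b + 30 * of_int c * normK b ^ 2) * r ^ 2
    + (\<Sum>(a, b, c)\<in>pos_forms. 10 * of_int a ^ 3 * of_int c ^ 2
        + 60 * of_int a ^ 2 * of_int c * normK b + 30 * of_int a * normK b ^ 2) * r ^ 3
    + (\<Sum>(a, b, c)\<in>pos_forms. 5 * of_int a ^ 4 * of_int c + 20 * of_int a ^ 3 * normK b) * r ^ 4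
    + (\<Sum>(a, b, c)\<in>pos_forms. of_int a ^ 5) * r ^ 5"
proof -
  have expand: "(x * r + y) ^ 5 + 20 * (x * r + y) ^ 3 * (N * r) + 30 * (x * r + y) * (N * r)\<^sup>2
    = y ^ 5 + (5 * x * y ^ 4 + 20 * y ^ 3 * N) * r
      + (10 * x ^ 2 * y ^ 3 + 60 * x * y ^ 2 * N + 30 * y * N ^ 2) * r ^ 2
      + (10 * x ^ 3 * y ^ 2 + 60 * x ^ 2 * y * N + 30 * x * N ^ 2) * r ^ 3
      + (5 * x ^ 4 * y + 20 * x ^ 3 * N) * r ^ 4 + x ^ 5 * r ^ 5" for x y N :: real
    by algebra
  show ?thesis
    by (simp only: expand) (simp add: case_prod_unfold sum.distrib sum_distrib_right distrib_right)
qed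

lemma Psum_5_form:
  assumes "d = 3"
  obtains p\<^sub>1 p\<^sub>2 where "\<And>z. Psum 5 z = alpha d 5 \<Delta> * (1 - ((cmod z)\<^sup>2) ^ 5)
    + p\<^sub>1 * ((cmod z)\<^sup>2 - ((cmod z)\<^sup>2) ^ 4) + p\<^sub>2 * (((cmod z)\<^sup>2)\<^sup>2 - ((cmod z)\<^sup>2) ^ 3)"
proof -
  define p\<^sub>1 where
    "p\<^sub>1 = (\<Sum>(a, b, c)\<in>pos_forms. 5 * of_int a * of_int c ^ 4 + 20 * of_int c ^ 3 * normK b)"
  define p\<^sub>2 where "p\<^sub>2 = (\<Sum>(a, b, c)\<in>pos_forms. 10 * of_int a ^ 2 * of_int c ^ 3
    + 60 * of_int a * of_int c ^ 2 * normK b + 30 * of_int c * normK b ^ 2)"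
  have a5: "(\<Sum>(a, b, c)\<in>pos_forms. of_int a ^ 5) = - (\<Sum>(a, b, c)\<in>pos_forms. real_of_int c ^ 5)"
    by (subst sum_pos_forms_neg_flip) (simp add: case_prod_unfold sum_negf)
  have a4: "(\<Sum>(a, b, c)\<in>pos_forms. 5 * of_int a ^ 4 * of_int c + 20 * of_int a ^ 3 * normK b)
      = - p\<^sub>1"
    unfolding p\<^sub>1_def
    by (subst sum_pos_forms_neg_flip) (simp add: case_prod_unfold sum_negf[symmetric] mult_ac)
  have a3: "(\<Sum>(a, b, c)\<in>pos_forms. 10 * of_int a ^ 3 * of_int c ^ 2
      + 60 * of_int a ^ 2 * of_int c * normK b + 30 * of_int a * normK b ^ 2) = - p\<^sub>2"
    unfolding p\<^sub>2_def
    by (subst sum_pos_forms_neg_flip) (simp add: case_prod_unfold sum_negf[symmetric] mult_ac)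
  show ?thesis
  proof
    show "Psum 5 z = alpha d 5 \<Delta> * (1 - ((cmod z)\<^sup>2) ^ 5)
      + p\<^sub>1 * ((cmod z)\<^sup>2 - ((cmod z)\<^sup>2) ^ 4) + p\<^sub>2 * (((cmod z)\<^sup>2)\<^sup>2 - ((cmod z)\<^sup>2) ^ 3)" for z
      unfolding Psum_5_expansion[OF assms] sum_pos_forms_quintic a5 a4 a3
        alpha_eq_sum_c[of 5, simplified]
      by (simp add: p\<^sub>1_def p\<^sub>2_def algebra_simps)
  qed
qed

lemma Psum_5_d3:
  assumes "d = 3"
  shows "Psum 5 z = alpha d 5 \<Delta> * (1 - (cmod z) ^ (2 * 5))"
proof -
  obtain p\<^sub>1 p\<^sub>2 where form: "\<And>z. Psum 5 z = alpha d 5 \<Delta> * (1 - ((cmod z)\<^sup>2) ^ 5)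
    + p\<^sub>1 * ((cmod z)\<^sup>2 - ((cmod z)\<^sup>2) ^ 4) + p\<^sub>2 * (((cmod z)\<^sup>2)\<^sup>2 - ((cmod z)\<^sup>2) ^ 3)"
    using Psum_5_form[OF assms] by blast
  have "852 * p\<^sub>1 + 348 * p\<^sub>2 = 0"
    using Psum_three_term_radial[OF _ form, of 2] by (simp add: power_divide algebra_simps)
  moreover have "20952 * p\<^sub>1 + 7848 * p\<^sub>2 = 0"
    using Psum_three_term_radial[OF _ form, of 3] by (simp add: power_divide algebra_simps)
  ultimately have "p\<^sub>1 = 0" "p\<^sub>2 = 0"
    by linarith+
  then show ?thesis
    using form[of z] by (simp add: power_mult)
qed

end

theorem theorem1p2:
  fixes d :: nat and \<Delta> :: int
  assumes "d \<in> {1, 2, 3, 7, 11}"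
    and "\<Delta> > 0"
    and "\<not> (\<exists>\<beta> \<in> O_d d. normK \<beta> = real_of_int \<Delta>)"
  shows "(\<forall>z. H d 1 \<Delta> z = alpha d 1 \<Delta>)
    \<and> (d \<in> {1, 3, 7} \<longrightarrow> (\<forall>z. H d 3 \<Delta> z = alpha d 3 \<Delta>))
    \<and> (d = 3 \<longrightarrow> (\<forall>z. H d 5 \<Delta> z = alpha d 5 \<Delta>))"
proof -
  interpret nonnorm_disc d \<Delta>
    using assms by unfold_locales
  have "Psum 1 z = alpha d 1 \<Delta> * (1 - (cmod z) ^ (2 * 1))" for z
    using Psum_1 by simp
  then have "H d 1 \<Delta> z = alpha d 1 \<Delta>" for z
    by (rule H_eq_alpha_if_Psum_eq[rotated]) simp
  moreover have "H d 3 \<Delta> z = alpha d 3 \<Delta>" if "d \<in> {1, 3, 7}" for z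
    using that Psum_3_d13 Psum_3_d7 by (intro H_eq_alpha_if_Psum_eq) auto
  moreover have "H d 5 \<Delta> z = alpha d 5 \<Delta>" if "d = 3" for z
    using Psum_5_d3[OF that] by (intro H_eq_alpha_if_Psum_eq) auto
  ultimately show ?thesis
    by blast
qed

end
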